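(* Let $1<p<\infty$ and $p'=p/(p-1)$. For every integrable $f$ on $Q_0$, \[ \|f\|_{GaRo_p}\le p'\,\|f\|_{GaRo_{L(p,\infty)}}. \] In particular $GaRo_{L(p,\infty)}\subset GaRo_p$.
   Context: $Q_0=(0,1)^n$; cubes are subcubes of $Q_0$ with sides parallel to the axes. $P$ is the set of countable families $\{Q_i\}_{i\in I}$ of subcubes of $Q_0$ with pairwise disjoint interiors. $f^*$ denotes the decreasing rearrangement; $\|\gamma\|_{L(p,\infty)}=\sup_{s>0}s^{1/p}\gamma^*(s)$. $\|f\|_{GaRo_p}=\sup_{\{Q_i\}\in P}\frac{\sum_{i}\frac1{|Q_i|}\int_{Q_i}\int_{Q_i}|f(x)-f(y)|\,dx\,dy}{(\sum_i|Q_i|)^{1/p'}}$. For an r.i. space $X$, $\Gamma_f^X$ is the set of $\gamma\in X$ such that for all $\{Q_i\}\in P$, $\sum_{i}\frac1{|Q_i|}\int_{Q_i}\int_{Q_i}|f(x)-f(y)|\,dx\,dy\le\sum_i\int_{Q_i}\gamma$, and $\|f\|_{GaRo_X}=\inf\{\|\gamma\|_X:\gamma\in\Gamma_f^X\}$ (infinite if $\Gamma_f^X=\emptyset$). *)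

theory Defs
  imports "HOL-Analysis.Analysis"
begin

definition Q0 :: "'a::euclidean_space set" where
  "Q0 = box 0 One"

text \<open>Subcubes of Q0 with sides parallel to the axes (taken open; boundaries are null sets).\<close>
definition is_cube :: "'a::euclidean_space set \<Rightarrow> bool" where
  "is_cube Q \<longleftrightarrow> (\<exists>a h. h > 0 \<and> Q = box a (a + h *\<^sub>R One)) \<and> Q \<subseteq> Q0"

definition cube_families :: "'a::euclidean_space set set set" where
  "cube_families = {F. countable F \<and> (\<forall>Q\<in>F. is_cube Q) \<and> pairwise disjnt F}"

definition fam_sum :: "'b set \<Rightarrow> ('b \<Rightarrow> ennreal) \<Rightarrow> ennreal" where
  "fam_sum F g = (\<integral>\<^sup>+ Q. g Q \<partial>count_space F)"

definition osc :: "('a::euclidean_space \<Rightarrow> real) \<Rightarrow> 'a set \<Rightarrow> ennreal" where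
  "osc f Q = (\<integral>\<^sup>+ x\<in>Q. (\<integral>\<^sup>+ y\<in>Q. ennreal \<bar>f x - f y\<bar> \<partial>lborel) \<partial>lborel) / emeasure lborel Q"

definition conj_exp :: "real \<Rightarrow> real" where
  "conj_exp p = p / (p - 1)"

definition GaRo_p :: "real \<Rightarrow> ('a::euclidean_space \<Rightarrow> real) \<Rightarrow> ennreal" where
  "GaRo_p p f = (SUP F\<in>cube_families.
      fam_sum F (osc f) /
      ennreal ((enn2real (fam_sum F (emeasure lborel))) powr (1 / conj_exp p)))"

definition distr_fun :: "('a::euclidean_space \<Rightarrow> real) \<Rightarrow> real \<Rightarrow> ennreal" where
  "distr_fun \<gamma> t = emeasure lborel {x \<in> Q0. t < \<bar>\<gamma> x\<bar>}"

definition rearr :: "('a::euclidean_space \<Rightarrow> real) \<Rightarrow> real \<Rightarrow> ennreal" where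
  "rearr \<gamma> s = Inf {ennreal t | t. t \<ge> 0 \<and> distr_fun \<gamma> t \<le> ennreal s}"

definition Lpinf_norm :: "real \<Rightarrow> ('a::euclidean_space \<Rightarrow> real) \<Rightarrow> ennreal" where
  "Lpinf_norm p \<gamma> = (SUP s\<in>{0<..}. ennreal (s powr (1 / p)) * rearr \<gamma> s)"

definition in_Lpinf :: "real \<Rightarrow> ('a::euclidean_space \<Rightarrow> real) \<Rightarrow> bool" where
  "in_Lpinf p \<gamma> \<longleftrightarrow> set_borel_measurable lborel Q0 \<gamma> \<and> Lpinf_norm p \<gamma> < top"

definition Gamma_Lpinf :: "real \<Rightarrow> ('a::euclidean_space \<Rightarrow> real) \<Rightarrow> ('a \<Rightarrow> real) set" where
  "Gamma_Lpinf p f = {\<gamma>. in_Lpinf p \<gamma> \<and>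
     (\<forall>F\<in>cube_families.
        enn2ereal (fam_sum F (osc f)) \<le> ereal (\<Sum>\<^sub>\<infinity>Q\<in>F. (LINT x:Q|lborel. \<gamma> x)))}"

text \<open>The GaRo_X norm for X = L(p,\<infinity>) (Inf {} = top).\<close>
definition GaRo_Lpinf :: "real \<Rightarrow> ('a::euclidean_space \<Rightarrow> real) \<Rightarrow> ennreal" where
  "GaRo_Lpinf p f = (INF \<gamma>\<in>Gamma_Lpinf p f. Lpinf_norm p \<gamma>)"

end

theory Submission
  imports Defs
begin

text \<open>Fix \<open>\<gamma> \<in> \<Gamma>\<^sub>f\<close> and a family of cubes with union \<open>E\<close>. The defining property of \<open>\<gamma>\<close> bounds the total
  oscillation by \<open>\<integral>\<^sub>E |\<gamma>|\<close>. By the layer-cake formula this is \<open>\<integral>\<^sub>0\<^sup>\<infinity> |{x \<in> E. |\<gamma> x| > t}| dt\<close>, and the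
  integrand is at most \<open>min |E| (\<parallel>\<gamma>\<parallel>/t)\<^sup>p\<close> by the weak-type Chebyshev bound; integrating gives
  \<open>p' \<parallel>\<gamma>\<parallel> |E|\<^bsup>1/p'\<^esup>\<close>, where \<open>\<parallel>\<gamma>\<parallel>\<close> is the \<open>L(p,\<infinity>)\<close> norm. Since \<open>|E| = \<Sigma> |Q\<^sub>i|\<close>, dividing by
  \<open>|E|\<^bsup>1/p'\<^esup>\<close> and taking the infimum over \<open>\<gamma>\<close> gives the claim.\<close>

lemma le_mult_INF_ennreal:
  fixes c x :: ennreal
  assumes "0 < c" "c < top" and "\<And>i. i \<in> I \<Longrightarrow> x \<le> c * f i"
  shows "x \<le> c * (INF i\<in>I. f i)"
proof -
  have "x / c \<le> (INF i\<in>I. f i)"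
  proof (rule INF_greatest)
    fix i assume "i \<in> I"
    then show "x / c \<le> f i"
      using assms by (intro divide_le_posI_ennreal) auto
  qed
  then have "x / c * c \<le> (INF i\<in>I. f i) * c"
    by (rule mult_right_mono) simp
  moreover have "x / c * c = x"
    using assms by (simp add: ennreal_divide_times ennreal_divide_self)
  ultimately show ?thesis
    by (simp add: mult.commute)
qed

lemma nn_integral_abs_layer_cake:
  fixes g :: "'a \<Rightarrow> real"
  assumes "sigma_finite_measure M" and [measurable]: "g \<in> borel_measurable M"
  shows "(\<integral>\<^sup>+x. ennreal \<bar>g x\<bar> \<partial>M)
       = (\<integral>\<^sup>+t. emeasure M {x\<in>space M. t < \<bar>g x\<bar>} * indicator {0..} t \<partial>lborel)"
proof -
  interpret pair_sigma_finite M lborel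
    by (intro pair_sigma_finite.intro assms lborel.sigma_finite_measure_axioms)
  define u where "u x t = (if 0 \<le> t \<and> t < \<bar>g x\<bar> then 1 else 0 :: ennreal)" for x t
  have [measurable]: "case_prod u \<in> borel_measurable (M \<Otimes>\<^sub>M lborel)"
    unfolding u_def by measurable
  have "(\<integral>\<^sup>+x. ennreal \<bar>g x\<bar> \<partial>M) = (\<integral>\<^sup>+x. \<integral>\<^sup>+t. u x t \<partial>lborel \<partial>M)"
  proof (intro nn_integral_cong)
    fix x
    have "u x = indicator {0..<\<bar>g x\<bar>}"
      by (auto simp: u_def indicator_def)
    then show "ennreal \<bar>g x\<bar> = (\<integral>\<^sup>+t. u x t \<partial>lborel)"
      by simp
  qed
  also have "\<dots> = (\<integral>\<^sup>+t. \<integral>\<^sup>+x. u x t \<partial>M \<partial>lborel)"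
    by (rule Fubini'[symmetric]) measurable
  also have "\<dots> = (\<integral>\<^sup>+t. emeasure M {x\<in>space M. t < \<bar>g x\<bar>} * indicator {0..} t \<partial>lborel)"
  proof (intro nn_integral_cong)
    fix t :: real
    have "(\<integral>\<^sup>+x. u x t \<partial>M) = (\<integral>\<^sup>+x. indicator {x\<in>space M. t < \<bar>g x\<bar>} x * indicator {0..} t \<partial>M)"
      unfolding u_def by (intro nn_integral_cong) (auto simp: indicator_def)
    then show "(\<integral>\<^sup>+x. u x t \<partial>M) = emeasure M {x\<in>space M. t < \<bar>g x\<bar>} * indicator {0..} t"
      by (simp add: nn_integral_multc)
  qed
  finally show ?thesis .
qed

lemma set_integral_le_nn_integral_abs:
  fixes \<gamma> :: "'a \<Rightarrow> real"
  assumes "(\<integral>\<^sup>+x. ennreal \<bar>\<gamma> x\<bar> * indicator A x \<partial>M) < top"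
  shows "(LINT x:A|M. \<gamma> x) \<le> enn2real (\<integral>\<^sup>+x. ennreal \<bar>\<gamma> x\<bar> * indicator A x \<partial>M)"
proof (cases "set_integrable M A \<gamma>")
  case True
  have "(\<integral>\<^sup>+x. ennreal (norm (indicator A x *\<^sub>R \<gamma> x)) \<partial>M)
      = (\<integral>\<^sup>+x. ennreal \<bar>\<gamma> x\<bar> * indicator A x \<partial>M)"
    by (intro nn_integral_cong) (auto simp: indicator_def)
  then have "ennreal (norm (LINT x:A|M. \<gamma> x)) \<le> (\<integral>\<^sup>+x. ennreal \<bar>\<gamma> x\<bar> * indicator A x \<partial>M)"
    using integral_norm_bound_ennreal[OF True[unfolded set_integrable_def]]
    unfolding set_lebesgue_integral_def by simp
  then have "norm (LINT x:A|M. \<gamma> x) \<le> enn2real (\<integral>\<^sup>+x. ennreal \<bar>\<gamma> x\<bar> * indicator A x \<partial>M)"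
    using assms by (metis enn2real_ennreal enn2real_mono norm_ge_zero)
  then show ?thesis
    by simp
qed (simp add: set_lebesgue_integral_def set_integrable_def not_integrable_integral_eq)

lemma infsum_set_integral_le_nn_integral_Union:
  fixes \<gamma> :: "'a \<Rightarrow> real"
  assumes sets: "\<And>Q. Q \<in> F \<Longrightarrow> Q \<in> sets M" and disj: "disjoint_family_on id F"
    and meas: "set_borel_measurable M (\<Union>F) \<gamma>"
    and fin: "(\<integral>\<^sup>+x. ennreal \<bar>\<gamma> x\<bar> * indicator (\<Union>F) x \<partial>M) < top"
  shows "(\<Sum>\<^sub>\<infinity>Q\<in>F. LINT x:Q|M. \<gamma> x) \<le> enn2real (\<integral>\<^sup>+x. ennreal \<bar>\<gamma> x\<bar> * indicator (\<Union>F) x \<partial>M)"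
    (is "_ \<le> enn2real ?K")
proof -
  define b where "b Q = (\<integral>\<^sup>+x. ennreal \<bar>\<gamma> x\<bar> * indicator Q x \<partial>M)" for Q
  have sum_b: "sum b F' \<le> ?K" if F': "finite F'" "F' \<subseteq> F" for F'
  proof -
    have [measurable]: "(\<lambda>x. indicator (\<Union>F) x *\<^sub>R \<gamma> x) \<in> borel_measurable M"
      using meas unfolding set_borel_measurable_def .
    have b_eq: "b Q = (\<integral>\<^sup>+x. ennreal \<bar>indicator (\<Union>F) x *\<^sub>R \<gamma> x\<bar> * indicator Q x \<partial>M)" if "Q \<in> F" for Q
      unfolding b_def using that by (intro nn_integral_cong) (auto simp: indicator_def)
    have "sum b F' = (\<Sum>Q\<in>F'. \<integral>\<^sup>+x. ennreal \<bar>indicator (\<Union>F) x *\<^sub>R \<gamma> x\<bar> * indicator Q x \<partial>M)"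
      using F' b_eq by (intro sum.cong) auto
    also have "\<dots> = (\<integral>\<^sup>+x. (\<Sum>Q\<in>F'. ennreal \<bar>indicator (\<Union>F) x *\<^sub>R \<gamma> x\<bar> * indicator Q x) \<partial>M)"
    proof (rule nn_integral_sum[symmetric])
      fix Q
      assume "Q \<in> F'"
      then have [measurable]: "Q \<in> sets M"
        using F'(2) sets by blast
      show "(\<lambda>x. ennreal \<bar>indicator (\<Union>F) x *\<^sub>R \<gamma> x\<bar> * indicator Q x) \<in> borel_measurable M"
        by measurable
    qed
    also have "\<dots> = (\<integral>\<^sup>+x. ennreal \<bar>\<gamma> x\<bar> * indicator (\<Union>F') x \<partial>M)"
    proof (intro nn_integral_cong)
      fix x
      have "disjoint_family_on id F'"
        using disj F'(2) disjoint_family_on_mono by blast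
      then have "indicator (\<Union>F') x = (\<Sum>Q\<in>F'. indicator Q x :: ennreal)"
        using indicator_UN_disjoint[OF F'(1), of id x] by simp
      then have "(\<Sum>Q\<in>F'. ennreal \<bar>indicator (\<Union>F) x *\<^sub>R \<gamma> x\<bar> * indicator Q x)
          = ennreal \<bar>indicator (\<Union>F) x *\<^sub>R \<gamma> x\<bar> * indicator (\<Union>F') x"
        by (simp add: sum_distrib_left)
      then show "(\<Sum>Q\<in>F'. ennreal \<bar>indicator (\<Union>F) x *\<^sub>R \<gamma> x\<bar> * indicator Q x)
          = ennreal \<bar>\<gamma> x\<bar> * indicator (\<Union>F') x"
        using F'(2) by (auto simp: indicator_def)
    qed
    also have "\<dots> \<le> ?K"
      using F'(2) by (intro nn_integral_mono) (auto simp: indicator_def)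
    finally show ?thesis .
  qed
  show ?thesis
  proof (cases "(\<lambda>Q. LINT x:Q|M. \<gamma> x) summable_on F")
    case True
    then show ?thesis
    proof (rule infsum_le_finite_sums)
      fix F' assume F': "finite F'" "F' \<subseteq> F"
      have b_fin: "b Q < top" if "Q \<in> F'" for Q
        using sum_b[of "{Q}"] F' that fin by auto
      have "(\<Sum>Q\<in>F'. LINT x:Q|M. \<gamma> x) \<le> (\<Sum>Q\<in>F'. enn2real (b Q))"
        using b_fin unfolding b_def by (intro sum_mono set_integral_le_nn_integral_abs)
      also have "\<dots> = enn2real (sum b F')"
        using b_fin by (simp add: enn2real_sum)
      also have "\<dots> \<le> enn2real ?K"
        using sum_b[OF F'] fin by (intro enn2real_mono) auto
      finally show "(\<Sum>Q\<in>F'. LINT x:Q|M. \<gamma> x) \<le> enn2real ?K" .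
    qed
  qed (simp add: infsum_not_exists)
qed

lemma nn_integral_powr_tail:
  fixes p C T :: real
  assumes p: "1 < p" and T: "0 < T" and C: "0 \<le> C"
  shows "(\<integral>\<^sup>+t. ennreal ((C / t) powr p) * indicator {T..} t \<partial>lborel)
       = ennreal (C powr p * T powr (1 - p) / (p - 1))"
proof (rule nn_integral_has_integral_lebesgue')
  have "((\<lambda>t. C powr p * t powr (-p)) has_integral C powr p * (-(T powr (-p + 1)) / (-p + 1))) {T..}"
    using p T by (intro has_integral_mult_right has_integral_powr_to_inf) auto
  moreover have "C powr p * (-(T powr (-p + 1)) / (-p + 1)) = C powr p * T powr (1 - p) / (p - 1)"
    using p by (simp add: field_simps)
  ultimately show "((\<lambda>t. (C / t) powr p) has_integral C powr p * T powr (1 - p) / (p - 1)) {T..}"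
    using T C by (subst has_integral_cong[where g = "\<lambda>t. C powr p * t powr (-p)"])
      (auto simp: powr_divide powr_minus_divide)
qed simp

lemma conj_exp_split_identity:
  fixes p C m :: real
  assumes p: "1 < p" and C: "0 < C" and m: "0 < m"
  defines "T \<equiv> C * m powr (-1 / p)"
  shows "m * T + C powr p * T powr (1 - p) / (p - 1) = conj_exp p * C * m powr (1 / conj_exp p)"
proof -
  have q: "1 / conj_exp p = 1 - 1 / p"
    using p unfolding conj_exp_def by (simp add: field_simps)
  have "m powr (1 / p) * m powr (1 - 1 / p) = m"
    using m by (simp flip: powr_add)
  then have a: "m * T = C * m powr (1 - 1 / p)"
    unfolding T_def using m by (simp add: powr_minus_divide field_simps)
  have "-1 / p * (1 - p) = 1 - 1 / p"
    using p by (simp add: field_simps)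
  then have "(m powr (-1 / p)) powr (1 - p) = m powr (1 - 1 / p)"
    using m by (simp only: powr_powr)
  then have b: "T powr (1 - p) = C powr (1 - p) * m powr (1 - 1 / p)"
    unfolding T_def using C m by (simp add: powr_mult)
  have c: "C powr p * C powr (1 - p) = C"
    using C by (simp flip: powr_add)
  have "m * T + C powr p * T powr (1 - p) / (p - 1)
      = C * m powr (1 - 1 / p) + C * m powr (1 - 1 / p) / (p - 1)"
    unfolding a b using c by (simp add: field_simps)
  also have "\<dots> = p / (p - 1) * C * m powr (1 - 1 / p)"
    using p by (simp add: field_simps)
  finally show ?thesis
    using q by (simp add: conj_exp_def)
qed

text \<open>Integrate the bound \<open>m\<close> below the level \<open>T\<close> where \<open>m = (C/T)\<^sup>p\<close> and the tail bound above it;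
  this choice of \<open>T\<close> is optimal and produces the constant \<open>p'\<close>.\<close>
lemma nn_integral_weak_type_profile_le:
  fixes \<phi> :: "real \<Rightarrow> ennreal" and p C m :: real
  assumes p: "1 < p" and C: "0 \<le> C" and m: "0 \<le> m"
    and le_m: "\<And>t. 0 \<le> t \<Longrightarrow> \<phi> t \<le> ennreal m"
    and le_tail: "\<And>t. 0 < t \<Longrightarrow> \<phi> t \<le> ennreal ((C / t) powr p)"
  shows "(\<integral>\<^sup>+t. \<phi> t * indicator {0..} t \<partial>lborel) \<le> ennreal (conj_exp p * C * m powr (1 / conj_exp p))"
proof (cases "C = 0 \<or> m = 0")
  case True
  have pointwise: "\<phi> t * indicator {0..} t \<le> ennreal m * indicator {0::real} t" for t
    using True le_m[of t] le_tail[of t] by (cases t "0::real" rule: linorder_cases) auto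
  have "(\<integral>\<^sup>+t. \<phi> t * indicator {0..} t \<partial>lborel) \<le> (\<integral>\<^sup>+t. ennreal m * indicator {0::real} t \<partial>lborel)"
    by (intro nn_integral_mono pointwise)
  also have "\<dots> = 0"
    by (simp add: nn_integral_cmult_indicator)
  finally show ?thesis
    by simp
next
  case False
  then have C0: "0 < C" and m0: "0 < m"
    using C m by auto
  define T where "T = C * m powr (-1 / p)"
  have T: "0 < T"
    using C0 m0 unfolding T_def by simp
  have pointwise: "\<phi> t * indicator {0..} t
      \<le> ennreal m * indicator {0..<T} t + ennreal ((C / t) powr p) * indicator {T..} t" for t
    using le_m[of t] le_tail[of t] T by (auto simp: indicator_def)
  have "(\<integral>\<^sup>+t. \<phi> t * indicator {0..} t \<partial>lborel)
      \<le> (\<integral>\<^sup>+t. ennreal m * indicator {0..<T} t + ennreal ((C / t) powr p) * indicator {T..} t \<partial>lborel)"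
    by (intro nn_integral_mono pointwise)
  also have "\<dots> = ennreal (m * T) + ennreal (C powr p * T powr (1 - p) / (p - 1))"
    using T m by (subst nn_integral_add)
      (auto simp: nn_integral_cmult_indicator ennreal_mult nn_integral_powr_tail[OF p T C])
  also have "\<dots> = ennreal (conj_exp p * C * m powr (1 / conj_exp p))"
    using conj_exp_split_identity[OF p C0 m0] T m p C by (simp add: T_def flip: ennreal_plus)
  finally show ?thesis .
qed

lemma sets_Q0_superlevel:
  fixes \<gamma> :: "'a::euclidean_space \<Rightarrow> real"
  assumes "set_borel_measurable lborel Q0 \<gamma>"
  shows "{x\<in>Q0. t < \<bar>\<gamma> x\<bar>} \<in> sets lborel"
proof -
  have [measurable]: "(\<lambda>x. indicator Q0 x *\<^sub>R \<gamma> x) \<in> borel_measurable lborel"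
    using assms unfolding set_borel_measurable_def .
  have [measurable]: "Q0 \<in> sets lborel"
    unfolding Q0_def by simp
  have "{x\<in>Q0. t < \<bar>\<gamma> x\<bar>} = Q0 \<inter> {x. t < \<bar>indicator Q0 x *\<^sub>R \<gamma> x\<bar>}"
    by (auto simp: indicator_def)
  also have "\<dots> \<in> sets lborel"
    by measurable
  finally show ?thesis .
qed

lemma distr_fun_antimono:
  fixes \<gamma> :: "'a::euclidean_space \<Rightarrow> real"
  assumes "set_borel_measurable lborel Q0 \<gamma>" and "t \<le> t'"
  shows "distr_fun \<gamma> t' \<le> distr_fun \<gamma> t"
  unfolding distr_fun_def
  by (rule emeasure_mono) (use assms sets_Q0_superlevel in auto)

text \<open>Chebyshev's inequality for \<open>L(p,\<infinity>)\<close>: evaluate the defining supremum at \<open>s\<close> slightly above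
  \<open>(C/t)\<^sup>p\<close>, where it forces \<open>\<gamma>\<^sup>*(s) < t\<close>.\<close>
lemma distr_fun_le_Lpinf_norm:
  fixes \<gamma> :: "'a::euclidean_space \<Rightarrow> real"
  assumes meas: "set_borel_measurable lborel Q0 \<gamma>" and N: "Lpinf_norm p \<gamma> \<le> ennreal C"
    and p: "0 < p" and t: "0 < t" and C: "0 \<le> C"
  shows "distr_fun \<gamma> t \<le> ennreal ((C / t) powr p)"
proof (rule ennreal_le_epsilon)
  fix e :: real
  assume e: "0 < e"
  define s where "s = (C / t) powr p + e"
  have s: "0 < s"
    using e unfolding s_def by (simp add: add_nonneg_pos)
  have "ennreal (s powr (1 / p)) * rearr \<gamma> s \<le> Lpinf_norm p \<gamma>"
    unfolding Lpinf_norm_def using s by (intro SUP_upper) auto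
  with N have sup_le: "ennreal (s powr (1 / p)) * rearr \<gamma> s \<le> ennreal C"
    by order
  have "C / t = ((C / t) powr p) powr (1 / p)"
    using p C t by (simp add: powr_powr)
  also have "\<dots> < s powr (1 / p)"
    using p e C t unfolding s_def by (intro powr_less_mono2) auto
  finally have C_less: "C < s powr (1 / p) * t"
    using t by (simp add: field_simps)
  have "rearr \<gamma> s < ennreal t"
  proof (rule ccontr)
    assume "\<not> rearr \<gamma> s < ennreal t"
    then have "ennreal (s powr (1 / p)) * ennreal t \<le> ennreal (s powr (1 / p)) * rearr \<gamma> s"
      by (intro mult_left_mono) auto
    with sup_le have "ennreal (s powr (1 / p) * t) \<le> ennreal C"
      using t by (simp add: ennreal_mult)
    with C C_less show False
      by (simp add: ennreal_le_iff)
  qed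
  then obtain t' where t': "ennreal t' < ennreal t" "0 \<le> t'" "distr_fun \<gamma> t' \<le> ennreal s"
    unfolding rearr_def by (auto simp: Inf_less_iff)
  then have "distr_fun \<gamma> t \<le> distr_fun \<gamma> t'"
    by (intro distr_fun_antimono[OF meas]) (simp add: ennreal_less_iff)
  also note t'(3)
  also have "ennreal s = ennreal ((C / t) powr p) + ennreal e"
    unfolding s_def using e by (simp add: ennreal_plus)
  finally show "distr_fun \<gamma> t \<le> ennreal ((C / t) powr p) + ennreal e" .
qed

lemma set_nn_integral_abs_le_Lpinf_norm:
  fixes \<gamma> :: "'a::euclidean_space \<Rightarrow> real"
  assumes meas: "set_borel_measurable lborel Q0 \<gamma>" and N: "Lpinf_norm p \<gamma> \<le> ennreal C"
    and p: "1 < p" and C: "0 \<le> C"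
    and E: "E \<in> sets lborel" "E \<subseteq> Q0" and m: "emeasure lborel E = ennreal m" "0 \<le> m"
  shows "(\<integral>\<^sup>+x. ennreal \<bar>\<gamma> x\<bar> * indicator E x \<partial>lborel)
       \<le> ennreal (conj_exp p * C * m powr (1 / conj_exp p))"
proof -
  define g where "g x = indicator E x * (indicator Q0 x *\<^sub>R \<gamma> x)" for x
  have g_meas: "g \<in> borel_measurable lborel"
    using meas E(1) unfolding g_def set_borel_measurable_def by measurable
  have "(\<integral>\<^sup>+x. ennreal \<bar>\<gamma> x\<bar> * indicator E x \<partial>lborel) = (\<integral>\<^sup>+x. ennreal \<bar>g x\<bar> \<partial>lborel)"
    using E(2) by (intro nn_integral_cong) (auto simp: g_def indicator_def)
  also have "\<dots> = (\<integral>\<^sup>+t. emeasure lborel {x. t < \<bar>g x\<bar>} * indicator {0..} t \<partial>lborel)"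
    using nn_integral_abs_layer_cake[OF lborel.sigma_finite_measure_axioms g_meas] by simp
  also have "\<dots> \<le> ennreal (conj_exp p * C * m powr (1 / conj_exp p))"
  proof (rule nn_integral_weak_type_profile_le[OF p C m(2)])
    fix t :: real
    assume "0 \<le> t"
    then have "{x. t < \<bar>g x\<bar>} \<subseteq> E"
      by (auto simp: g_def indicator_def split: if_splits)
    then show "emeasure lborel {x. t < \<bar>g x\<bar>} \<le> ennreal m"
      using E(1) m(1) by (metis emeasure_mono)
  next
    fix t :: real
    assume t: "0 < t"
    have "{x. t < \<bar>g x\<bar>} \<subseteq> {x\<in>Q0. t < \<bar>\<gamma> x\<bar>}"
      using t by (auto simp: g_def indicator_def split: if_splits)
    then have "emeasure lborel {x. t < \<bar>g x\<bar>} \<le> distr_fun \<gamma> t"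
      unfolding distr_fun_def by (intro emeasure_mono sets_Q0_superlevel meas)
    also have "\<dots> \<le> ennreal ((C / t) powr p)"
      using distr_fun_le_Lpinf_norm[OF meas N _ t C] p by simp
    finally show "emeasure lborel {x. t < \<bar>g x\<bar>} \<le> ennreal ((C / t) powr p)" .
  qed
  finally show ?thesis .
qed

lemma emeasure_Q0: "emeasure lborel (Q0 :: 'a::euclidean_space set) = 1"
  unfolding Q0_def by (simp add: inner_Basis)

lemma Union_cube_family:
  fixes F :: "'a::euclidean_space set set"
  assumes "F \<in> cube_families"
  shows "\<Union>F \<in> sets lborel" and "\<Union>F \<subseteq> Q0" and "disjoint_family_on id F"
    and "emeasure lborel (\<Union>F) = fam_sum F (emeasure lborel)"
proof -
  have F: "countable F" "\<And>Q. Q \<in> F \<Longrightarrow> Q \<in> sets lborel \<and> Q \<subseteq> Q0" "pairwise disjnt F"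
    using assms unfolding cube_families_def is_cube_def by auto
  then show "\<Union>F \<in> sets lborel" and "\<Union>F \<subseteq> Q0"
    by (auto intro: sets.countable_Union)
  show disj: "disjoint_family_on id F"
    using F(3) unfolding disjoint_family_on_def pairwise_def disjnt_def by auto
  show "emeasure lborel (\<Union>F) = fam_sum F (emeasure lborel)"
    using emeasure_UN_countable[of F id lborel] F disj unfolding fam_sum_def by simp
qed

lemma fam_sum_osc_le_Lpinf_norm:
  fixes f \<gamma> :: "'a::euclidean_space \<Rightarrow> real"
  assumes \<gamma>: "\<gamma> \<in> Gamma_Lpinf p f" and F: "F \<in> cube_families" and p: "1 < p"
  shows "fam_sum F (osc f) \<le> ennreal (conj_exp p * enn2real (Lpinf_norm p \<gamma>)
           * enn2real (fam_sum F (emeasure lborel)) powr (1 / conj_exp p))"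
proof -
  have meas: "set_borel_measurable lborel Q0 \<gamma>" and N: "Lpinf_norm p \<gamma> < top"
    and osc_le: "enn2ereal (fam_sum F (osc f)) \<le> ereal (\<Sum>\<^sub>\<infinity>Q\<in>F. LINT x:Q|lborel. \<gamma> x)"
    using \<gamma> F unfolding Gamma_Lpinf_def in_Lpinf_def by auto
  have sets: "\<And>Q. Q \<in> F \<Longrightarrow> Q \<in> sets lborel"
    using F unfolding cube_families_def is_cube_def by auto
  note E = Union_cube_family[OF F]
  define m where "m = enn2real (fam_sum F (emeasure lborel))"
  have "emeasure lborel (\<Union>F) \<le> emeasure lborel (Q0 :: 'a set)"
    using E(2) by (intro emeasure_mono) (auto simp: Q0_def)
  then have "fam_sum F (emeasure lborel) < top"
    using E(4) emeasure_Q0 by (metis ennreal_one_less_top le_less_trans)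
  then have m: "emeasure lborel (\<Union>F) = ennreal m" "0 \<le> m"
    unfolding m_def E(4) by simp_all
  define K where "K = (\<integral>\<^sup>+x. ennreal \<bar>\<gamma> x\<bar> * indicator (\<Union>F) x \<partial>lborel)"
  have K: "K \<le> ennreal (conj_exp p * enn2real (Lpinf_norm p \<gamma>) * m powr (1 / conj_exp p))"
    unfolding K_def using N
    by (intro set_nn_integral_abs_le_Lpinf_norm[OF meas _ p _ E(1,2) m]) (auto simp: less_top)
  then have K_fin: "K < top"
    using ennreal_less_top le_less_trans by blast
  have "set_borel_measurable lborel (\<Union>F) \<gamma>"
    using meas E(1,2) by (rule set_borel_measurable_subset)
  then have "(\<Sum>\<^sub>\<infinity>Q\<in>F. LINT x:Q|lborel. \<gamma> x) \<le> enn2real K"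
    unfolding K_def using K_fin[unfolded K_def] E(3) sets
    by (intro infsum_set_integral_le_nn_integral_Union)
  moreover have "ereal (enn2real K) = enn2ereal K"
    using K_fin by (metis enn2real_nonneg ennreal_enn2real enn2ereal_ennreal)
  ultimately have "enn2ereal (fam_sum F (osc f)) \<le> enn2ereal K"
    using osc_le by (metis ereal_less_eq(3) order_trans)
  with K show ?thesis
    unfolding m_def by (auto simp: less_eq_ennreal.rep_eq intro: order_trans)
qed

lemma GaRo_p_le_Lpinf_norm:
  fixes f \<gamma> :: "'a::euclidean_space \<Rightarrow> real"
  assumes \<gamma>: "\<gamma> \<in> Gamma_Lpinf p f" and p: "1 < p"
  shows "GaRo_p p f \<le> ennreal (conj_exp p) * Lpinf_norm p \<gamma>"
  unfolding GaRo_p_def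
proof (rule SUP_least)
  fix F :: "'a set set"
  assume F: "F \<in> cube_families"
  define r where "r = enn2real (fam_sum F (emeasure lborel)) powr (1 / conj_exp p)"
  define C where "C = enn2real (Lpinf_norm p \<gamma>)"
  have "Lpinf_norm p \<gamma> < top"
    using \<gamma> unfolding Gamma_Lpinf_def in_Lpinf_def by auto
  then have N: "Lpinf_norm p \<gamma> = ennreal C"
    unfolding C_def by simp
  have "0 \<le> conj_exp p"
    using p unfolding conj_exp_def by simp
  then have "ennreal (conj_exp p * C * r) = ennreal r * (ennreal (conj_exp p) * Lpinf_norm p \<gamma>)"
    unfolding N by (simp add: r_def C_def ennreal_mult mult_ac)
  then have osc_le: "fam_sum F (osc f) \<le> ennreal r * (ennreal (conj_exp p) * Lpinf_norm p \<gamma>)"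
    using fam_sum_osc_le_Lpinf_norm[OF \<gamma> F p] unfolding r_def C_def by simp
  show "fam_sum F (osc f) / ennreal r \<le> ennreal (conj_exp p) * Lpinf_norm p \<gamma>"
  proof (cases "0 < r")
    case True
    then show ?thesis
      using osc_le by (intro divide_le_posI_ennreal) auto
  next
    case False
    then show ?thesis
      using osc_le by (simp add: r_def)
  qed
qed

theorem mainTheorem6:
  fixes p :: real and f :: "'a::euclidean_space \<Rightarrow> real"
  assumes "1 < p"
    and "set_integrable lborel Q0 f"
  shows "GaRo_p p f \<le> ennreal (conj_exp p) * GaRo_Lpinf p f
    \<and> (GaRo_Lpinf p f < top \<longrightarrow> GaRo_p p f < top)"
proof -
  have "0 < conj_exp p"
    using assms(1) unfolding conj_exp_def by simp
  then have c: "0 < ennreal (conj_exp p)" "ennreal (conj_exp p) < top"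
    by simp_all
  have bound: "GaRo_p p f \<le> ennreal (conj_exp p) * GaRo_Lpinf p f"
    unfolding GaRo_Lpinf_def
    using c GaRo_p_le_Lpinf_norm[OF _ assms(1)] by (rule le_mult_INF_ennreal)
  moreover have "GaRo_Lpinf p f < top \<longrightarrow> GaRo_p p f < top"
    using bound c by (auto simp: ennreal_mult_less_top intro: le_less_trans)
  ultimately show ?thesis ..
qed

end
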